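(* Let $\vec a\in\mathbb R^n_{>0}$ have rationally independent components, and suppose $\vec v\in\mathbb Z^n\setminus\mathbb Z^n_{\le0}$ satisfies $\mathfrak o^{\vec a}_{\vec v}=\mathfrak o^{\vec a}_k$ for some $k\in\mathbb Z_{\ge1}$. Then each component of $\vec v$ is at most the corresponding component of $\Gamma^{\vec a}_k$.
   Context: The Reeb orbits of $\partial E(\vec a)$ ($E(\vec a)=\{\pi\sum|z_j|^2/a_j\le1\}$, contact form $\lambda_{std}|$) are the iterates $\nu_j^m$ of the simple orbits $\nu_j$ on the coordinate axes, with action $ma_j$; $\mathfrak o^{\vec a}_k$ is the orbit of $k$-th smallest action. For $\vec v\in\mathbb Z^n\setminus\mathbb Z^n_{\le0}$, $\mathfrak o^{\vec a}_{\vec v}:=\nu_{i_M}^{v_{i_M}}$ with $i_M$ the index maximizing $a_iv_i$. $\Gamma^{\vec a}_k\in\mathbb Z^n_{\ge0}$ is the unique tuple $(w_1,\dots,w_n)$ with $\sum w_i=k$ minimizing $\max_i a_iw_i$. *)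

theory Defs
  imports Complex_Main
begin

text \<open>Vectors in R^n / Z^n are modelled as functions on indices 0..n-1 (i < n).
  A Reeb orbit nu_j^m of the ellipsoid boundary is represented by the pair (j, m)
  with j < n and m >= 1; its action is m * a_j.\<close>

definition rat_indep :: "nat \<Rightarrow> (nat \<Rightarrow> real) \<Rightarrow> bool" where
  "rat_indep n a \<longleftrightarrow>
     (\<forall>q :: nat \<Rightarrow> rat. (\<Sum>i<n. of_rat (q i) * a i) = 0 \<longrightarrow> (\<forall>i<n. q i = 0))"

definition orbits :: "nat \<Rightarrow> (nat \<times> nat) set" where
  "orbits n = {(j, m). j < n \<and> m \<ge> 1}"

definition action :: "(nat \<Rightarrow> real) \<Rightarrow> nat \<times> nat \<Rightarrow> real" where
  "action a p = real (snd p) * a (fst p)"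

definition orbit_k :: "nat \<Rightarrow> (nat \<Rightarrow> real) \<Rightarrow> nat \<Rightarrow> nat \<times> nat" where
  "orbit_k n a k = (THE p. p \<in> orbits n \<and>
      card {p' \<in> orbits n. action a p' < action a p} = k - 1)"

definition idx_max :: "nat \<Rightarrow> (nat \<Rightarrow> real) \<Rightarrow> (nat \<Rightarrow> int) \<Rightarrow> nat" where
  "idx_max n a v = (THE i. i < n \<and> (\<forall>j<n. a j * of_int (v j) \<le> a i * of_int (v i)))"

definition orbit_v :: "nat \<Rightarrow> (nat \<Rightarrow> real) \<Rightarrow> (nat \<Rightarrow> int) \<Rightarrow> nat \<times> nat" where
  "orbit_v n a v = (idx_max n a v, nat (v (idx_max n a v)))"

definition tuples :: "nat \<Rightarrow> nat \<Rightarrow> (nat \<Rightarrow> nat) set" where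
  "tuples n k = {w. (\<forall>i\<ge>n. w i = 0) \<and> (\<Sum>i<n. w i) = k}"

definition maxval :: "nat \<Rightarrow> (nat \<Rightarrow> real) \<Rightarrow> (nat \<Rightarrow> nat) \<Rightarrow> real" where
  "maxval n a w = Max ((\<lambda>i. a i * real (w i)) ` {..<n})"

definition Gamma :: "nat \<Rightarrow> (nat \<Rightarrow> real) \<Rightarrow> nat \<Rightarrow> (nat \<Rightarrow> nat)" where
  "Gamma n a k = (THE w. w \<in> tuples n k \<and>
      (\<forall>w' \<in> tuples n k. maxval n a w \<le> maxval n a w'))"

end

(* Let T = a_i v_i with i = i_M, the action of the orbit nu_i^(v_i).  Rational independence
   makes the actions of distinct orbits distinct, so exactly k orbits have action at most T;
   counting the iterates of each nu_j, this says that the tuple w_j = floor (T / a_j) has sum k.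
   Every tuple of sum k with max_j a_j w'_j <= T is dominated by w componentwise, hence equal
   to it, so w is the unique minimizer Gamma_k.  Finally a_j v_j <= T gives v_j <= w_j. *)

theory Submission
  imports Defs
begin

definition rank_by :: "('a \<Rightarrow> 'b::linorder) \<Rightarrow> 'a set \<Rightarrow> 'a \<Rightarrow> nat" where
  "rank_by f X x = card {y \<in> X. f y < f x}"

lemma rank_by_strict_mono:
  assumes fin: "finite {z \<in> X. f z < f y}" and "x \<in> X" and "f x < f y"
  shows "rank_by f X x < rank_by f X y"
  unfolding rank_by_def
  by (rule psubset_card_mono[OF fin]) (use assms in auto)

lemma inj_on_rank_by:
  assumes "inj_on f X" and fin: "\<And>x. x \<in> X \<Longrightarrow> finite {y \<in> X. f y < f x}"
  shows "inj_on (rank_by f X) X"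
proof (rule inj_onI, rule ccontr)
  fix x y assume "x \<in> X" "y \<in> X" "rank_by f X x = rank_by f X y" "x \<noteq> y"
  then have "f x \<noteq> f y" using assms(1) by (auto simp: inj_on_def)
  then consider "f x < f y" | "f y < f x" by (meson linorder_neqE)
  then show False
    using rank_by_strict_mono[OF fin[OF \<open>x \<in> X\<close>] \<open>y \<in> X\<close>]
      rank_by_strict_mono[OF fin[OF \<open>y \<in> X\<close>] \<open>x \<in> X\<close>] \<open>rank_by f X x = rank_by f X y\<close>
    by cases auto
qed

lemma card_le_eq_Suc_rank_by:
  assumes "inj_on f X" and "finite {y \<in> X. f y < f x}" and "x \<in> X"
  shows "card {y \<in> X. f y \<le> f x} = Suc (rank_by f X x)"
proof -
  have "{y \<in> X. f y \<le> f x} = insert x {y \<in> X. f y < f x}"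
  proof (intro equalityI subsetI)
    fix y assume y: "y \<in> {y \<in> X. f y \<le> f x}"
    show "y \<in> insert x {y \<in> X. f y < f x}"
    proof (cases "f y = f x")
      case True
      then show ?thesis using inj_onD[OF assms(1) _ _ assms(3)] y by simp
    qed (use y in auto)
  qed (use assms(3) in auto)
  then show ?thesis using assms(2) by (simp add: rank_by_def)
qed

text \<open>Below any element, the one of largest value has rank one less.\<close>

lemma rank_by_surj:
  assumes "inj_on f X" and fin: "\<And>x. x \<in> X \<Longrightarrow> finite {y \<in> X. f y < f x}"
  shows "x \<in> X \<Longrightarrow> k \<le> rank_by f X x \<Longrightarrow> \<exists>z\<in>X. rank_by f X z = k"
proof (induction "rank_by f X x" arbitrary: x)
  case 0
  then show ?case by auto
next
  case (Suc r)
  define B where "B = {y \<in> X. f y < f x}"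
  have "finite B" using fin[OF Suc.prems(1)] by (simp add: B_def)
  moreover have "B \<noteq> {}"
    using Suc.hyps(2) unfolding B_def rank_by_def by (metis card.empty nat.distinct(1))
  ultimately have "Max (f ` B) \<in> f ` B" by simp
  then obtain z where z: "z \<in> B" "f z = Max (f ` B)" by (metis imageE)
  have "z \<in> X" using z(1) by (simp add: B_def)
  have B_eq: "B = {y \<in> X. f y \<le> f z}"
    using z \<open>finite B\<close> by (auto simp: B_def)
  then have "finite {y \<in> X. f y < f z}"
    using \<open>finite B\<close> by (auto elim: rev_finite_subset)
  then have "r = rank_by f X z"
    using card_le_eq_Suc_rank_by[OF assms(1) _ \<open>z \<in> X\<close>] B_eq Suc.hyps(2)
    by (simp add: B_def rank_by_def)
  then show ?case
    using Suc.hyps Suc.prems \<open>z \<in> X\<close> by (cases "k = Suc r") auto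
qed

lemma of_nat_mult_le_iff_le_nat_floor:
  fixes a T :: real
  assumes "0 < a" "0 < m"
  shows "real m * a \<le> T \<longleftrightarrow> m \<le> nat \<lfloor>T / a\<rfloor>"
proof -
  have "real m * a \<le> T \<longleftrightarrow> of_int (int m) \<le> T / a"
    using assms(1) by (simp add: pos_le_divide_eq)
  also have "\<dots> \<longleftrightarrow> int m \<le> \<lfloor>T / a\<rfloor>"
    by (rule le_floor_iff[symmetric])
  also have "\<dots> \<longleftrightarrow> m \<le> nat \<lfloor>T / a\<rfloor>"
    using assms(2) by linarith
  finally show ?thesis .
qed

lemma rat_indep_pair:
  fixes x y :: int
  assumes "rat_indep n a" "i < n" "j < n" "i \<noteq> j" "of_int x * a i = of_int y * a j"
  shows "x = 0 \<and> y = 0"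
proof -
  define q :: "nat \<Rightarrow> rat" where
    "q = (\<lambda>l. (if l = i then of_int x else 0) + (if l = j then - of_int y else 0))"
  have "(\<Sum>l<n. of_rat (q l) * a l)
      = (\<Sum>l<n. (if l = i then of_int x * a i else 0) + (if l = j then - (of_int y * a j) else 0))"
    by (rule sum.cong) (auto simp: q_def of_rat_add of_rat_minus distrib_right)
  also have "\<dots> = 0"
    using assms(2,3,5) by (simp add: sum.distrib)
  finally have "\<forall>l<n. q l = 0" using assms(1) unfolding rat_indep_def by blast
  then show ?thesis using assms(2-4) by (auto simp: q_def)
qed

lemma inj_on_action:
  assumes "rat_indep n a" "\<forall>i<n. 0 < a i"
  shows "inj_on (action a) (orbits n)"
proof (rule inj_onI, clarify)
  fix j m j' m'
  assume "(j, m) \<in> orbits n" "(j', m') \<in> orbits n" and eq: "action a (j, m) = action a (j', m')"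
  then have h: "j < n" "1 \<le> m" "j' < n" "1 \<le> m'" by (auto simp: orbits_def)
  have eq': "of_int (int m) * a j = of_int (int m') * a j'" using eq by (simp add: action_def)
  have "j = j'"
  proof (rule ccontr)
    assume "j \<noteq> j'"
    with rat_indep_pair[OF assms(1) h(1,3) _ eq'] h(2) show False by simp
  qed
  moreover have "0 < a j" using assms(2) h(1) by simp
  ultimately show "j = j' \<and> m = m'" using eq' by simp
qed

lemma orbits_action_le_eq_Sigma:
  assumes "\<forall>i<n. 0 < a i"
  shows "{p \<in> orbits n. action a p \<le> T} = (SIGMA j:{..<n}. {1..nat \<lfloor>T / a j\<rfloor>})"
proof (rule set_eqI, clarify)
  fix j m
  show "(j, m) \<in> {p \<in> orbits n. action a p \<le> T} \<longleftrightarrow>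
      (j, m) \<in> (SIGMA j:{..<n}. {1..nat \<lfloor>T / a j\<rfloor>})"
  proof (cases "j < n \<and> 1 \<le> m")
    case True
    then show ?thesis
      using of_nat_mult_le_iff_le_nat_floor[of "a j" m T] assms by (simp add: orbits_def action_def)
  qed (auto simp: orbits_def)
qed

lemma card_orbits_action_le:
  assumes "\<forall>i<n. 0 < a i"
  shows "card {p \<in> orbits n. action a p \<le> T} = (\<Sum>j<n. nat \<lfloor>T / a j\<rfloor>)"
  by (simp add: orbits_action_le_eq_Sigma[OF assms])

lemma finite_orbits_action_less:
  assumes "\<forall>i<n. 0 < a i"
  shows "finite {p \<in> orbits n. action a p < T}"
proof -
  have "finite {p \<in> orbits n. action a p \<le> T}"
    by (simp add: orbits_action_le_eq_Sigma[OF assms])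
  then show ?thesis by (rule rev_finite_subset) auto
qed

lemma orbit_k_rank:
  assumes "1 \<le> n" "\<forall>i<n. 0 < a i" "rat_indep n a" "1 \<le> k"
  shows "orbit_k n a k \<in> orbits n \<and> rank_by (action a) (orbits n) (orbit_k n a k) = k - 1"
proof -
  note inj = inj_on_action[OF assms(3,2)] and fin = finite_orbits_action_less[OF assms(2)]
  have "(0, k) \<in> orbits n" using assms(1,4) by (simp add: orbits_def)
  have "0 < a 0" using assms(1,2) by simp
  then have "k = nat \<lfloor>action a (0, k) / a 0\<rfloor>" by (simp add: action_def)
  also have "\<dots> \<le> card {p \<in> orbits n. action a p \<le> action a (0, k)}"
    unfolding card_orbits_action_le[OF assms(2)] using assms(1) by (intro member_le_sum) auto
  also have "\<dots> = Suc (rank_by (action a) (orbits n) (0, k))"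
    by (rule card_le_eq_Suc_rank_by[OF inj fin \<open>(0, k) \<in> orbits n\<close>])
  finally have "k - 1 \<le> rank_by (action a) (orbits n) (0, k)" by simp
  then obtain p where p: "p \<in> orbits n" "rank_by (action a) (orbits n) p = k - 1"
    using rank_by_surj[OF inj fin \<open>(0, k) \<in> orbits n\<close>] by blast
  have "orbit_k n a k = p"
    unfolding orbit_k_def rank_by_def[symmetric]
  proof (rule the_equality)
    fix q assume "q \<in> orbits n \<and> rank_by (action a) (orbits n) q = k - 1"
    then show "q = p" using inj_onD[OF inj_on_rank_by[OF inj fin]] p by simp
  qed (use p in simp)
  then show ?thesis using p by simp
qed

lemma sum_floor_action_orbit_k:
  assumes "1 \<le> n" "\<forall>i<n. 0 < a i" "rat_indep n a" "1 \<le> k"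
  shows "(\<Sum>j<n. nat \<lfloor>action a (orbit_k n a k) / a j\<rfloor>) = k"
  using card_le_eq_Suc_rank_by[OF inj_on_action[OF assms(3,2)] finite_orbits_action_less[OF assms(2)]]
    orbit_k_rank[OF assms] assms(4)
  by (simp add: card_orbits_action_le[OF assms(2), symmetric])

definition iterate_count :: "nat \<Rightarrow> (nat \<Rightarrow> real) \<Rightarrow> real \<Rightarrow> nat \<Rightarrow> nat" where
  "iterate_count n a T = (\<lambda>j. if j < n then nat \<lfloor>T / a j\<rfloor> else 0)"

lemma maxval_le_iff:
  assumes "1 \<le> n"
  shows "maxval n a w \<le> T \<longleftrightarrow> (\<forall>j<n. a j * real (w j) \<le> T)"
proof -
  have "0 \<in> {..<n}" using assms by simp
  then show ?thesis unfolding maxval_def by (subst Max_le_iff) auto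
qed

lemma tuples_eq_if_le:
  assumes "w \<in> tuples n k" "w' \<in> tuples n k" "\<forall>j<n. w' j \<le> w j"
  shows "w' = w"
proof
  fix j
  show "w' j = w j"
  proof (cases "j < n")
    case True
    then show ?thesis
      using sum_mono_inv[where f = w' and g = w and I = "{..<n}"] assms by (simp add: tuples_def)
  next
    case False
    then show ?thesis using assms(1,2) by (simp add: tuples_def)
  qed
qed

lemma Gamma_eq_iterate_count:
  assumes "1 \<le> n" "\<forall>i<n. 0 < a i" "0 \<le> T" "(\<Sum>j<n. nat \<lfloor>T / a j\<rfloor>) = k"
  shows "Gamma n a k = iterate_count n a T"
proof -
  define w where "w = iterate_count n a T"
  have w: "w \<in> tuples n k"
    using assms(4) by (simp add: tuples_def w_def iterate_count_def)
  have "a j * real (w j) \<le> T" if "j < n" for j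
  proof -
    have "0 < a j" using that assms(2) by simp
    then have "0 \<le> T / a j" using assms(3) by simp
    then have "real (w j) \<le> T / a j"
      using that by (simp add: w_def iterate_count_def of_nat_nat)
    then show ?thesis using that assms(2) by (simp add: pos_le_divide_eq mult.commute)
  qed
  then have w_le: "maxval n a w \<le> T" by (simp add: maxval_le_iff[OF assms(1)])
  have dominated: "w' = w" if "w' \<in> tuples n k" "maxval n a w' \<le> T" for w'
  proof (rule tuples_eq_if_le[OF w that(1)], intro allI impI)
    fix j assume "j < n"
    then have "real (w' j) \<le> T / a j"
      using that(2) assms(2) by (simp add: maxval_le_iff[OF assms(1)] pos_le_divide_eq mult.commute)
    then show "w' j \<le> w j" using \<open>j < n\<close> by (simp add: w_def iterate_count_def le_nat_floor)
  qed
  show ?thesis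
    unfolding Gamma_def w_def[symmetric]
  proof (rule the_equality)
    show "w \<in> tuples n k \<and> (\<forall>w'\<in>tuples n k. maxval n a w \<le> maxval n a w')"
    proof (intro conjI w ballI)
      fix w' assume "w' \<in> tuples n k"
      then show "maxval n a w \<le> maxval n a w'"
        using w_le dominated[of w'] by (cases "maxval n a w' \<le> T") auto
    qed
  next
    fix w'' assume "w'' \<in> tuples n k \<and> (\<forall>w'\<in>tuples n k. maxval n a w'' \<le> maxval n a w')"
    then show "w'' = w" using w w_le dominated[of w''] by auto
  qed
qed

lemma idx_max_spec:
  assumes "\<forall>i<n. 0 < a i" "rat_indep n a" "\<exists>i<n. 0 < v i"
  shows "idx_max n a v < n \<and> 0 < v (idx_max n a v) \<and>
    (\<forall>j<n. a j * of_int (v j) \<le> a (idx_max n a v) * of_int (v (idx_max n a v)))"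
proof -
  let ?g = "\<lambda>i. a i * of_int (v i)"
  obtain i0 where i0: "i0 < n" "0 < v i0" using assms(3) by blast
  have "finite (?g ` {..<n})" "?g ` {..<n} \<noteq> {}" using i0 by auto
  then have "Max (?g ` {..<n}) \<in> ?g ` {..<n}" by (rule Max_in)
  then obtain i where "Max (?g ` {..<n}) = ?g i" and "i \<in> {..<n}" by (rule imageE)
  then have i: "i < n" "?g i = Max (?g ` {..<n})" by simp_all
  then have i_max: "\<forall>j<n. ?g j \<le> ?g i" by simp
  have "0 < ?g i0" using i0 assms(1) by simp
  moreover have "?g i0 \<le> ?g i" using i_max i0(1) by blast
  ultimately have g_pos: "0 < ?g i" by linarith
  have "0 < a i" using assms(1) i(1) by simp
  have "idx_max n a v = i"
    unfolding idx_max_def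
  proof (rule the_equality)
    fix i' assume i': "i' < n \<and> (\<forall>j<n. ?g j \<le> ?g i')"
    then have eq: "of_int (v i') * a i' = of_int (v i) * a i"
      using i_max i(1) by (simp add: mult.commute order_antisym)
    show "i' = i"
    proof (rule ccontr)
      assume "i' \<noteq> i"
      with rat_indep_pair[OF assms(2) _ i(1) _ eq] i' g_pos show False by simp
    qed
  qed (use i i_max in simp)
  moreover have "0 < v i"
    using g_pos \<open>0 < a i\<close> by (simp add: zero_less_mult_iff)
  ultimately show ?thesis using i(1) i_max by simp
qed

theorem mainTheorem13:
  fixes n :: nat and a :: "nat \<Rightarrow> real" and v :: "nat \<Rightarrow> int" and k :: nat
  assumes "n \<ge> 1"
    and "\<forall>i<n. a i > 0"
    and "rat_indep n a"
    and "\<exists>i<n. v i > 0"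
    and "k \<ge> 1"
    and "orbit_v n a v = orbit_k n a k"
  shows "\<forall>i<n. v i \<le> int (Gamma n a k i)"
proof -
  define i where "i = idx_max n a v"
  define T where "T = a i * of_int (v i)"
  have i: "i < n" "0 < v i" and v_le: "\<forall>j<n. a j * of_int (v j) \<le> T"
    using idx_max_spec[OF assms(2-4)] by (simp_all add: i_def T_def)
  have "orbit_k n a k = (i, nat (v i))"
    using assms(6) by (simp add: orbit_v_def i_def)
  then have "action a (orbit_k n a k) = T"
    using i(2) by (simp add: action_def T_def mult.commute)
  moreover have "0 \<le> T" using i assms(2) by (simp add: T_def less_imp_le)
  ultimately have Gamma: "Gamma n a k = iterate_count n a T"
    using Gamma_eq_iterate_count[OF assms(1,2)] sum_floor_action_orbit_k[OF assms(1-3,5)] by simp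
  show ?thesis
  proof (intro allI impI)
    fix j assume "j < n"
    then have "of_int (v j) \<le> T / a j"
      using v_le assms(2) by (simp add: pos_le_divide_eq mult.commute)
    then show "v j \<le> int (Gamma n a k j)"
      using \<open>j < n\<close> by (simp add: Gamma iterate_count_def le_floor_iff)
  qed
qed

end
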